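(* Let $k\in\mathbb{N}$ and $0\le i<k$. Define $\mathrm{bit}_i:\mathbb{Z}_{2^k}\to\{-1,1\}$ by $\mathrm{bit}_i(x)=(-1)^{x_i}$, where $x=\sum_{j=0}^{k-1}x_j2^j$ with $x_j\in\{0,1\}$. Let $\alpha\in\mathbb{Z}_{2^k}$. Then $\widehat{\mathrm{bit}_i}(\alpha)=0$ unless $\alpha$ is an odd multiple of $2^{k-i-1}$, in which case $|\widehat{\mathrm{bit}_i}(\alpha)|=O(2^{k-i}/|\alpha|_{2^k})$, i.e. $|\widehat{\mathrm{bit}_i}(\alpha)|\le c\,2^{k-i}/|\alpha|_{2^k}$ for an absolute constant $c$ independent of $k,i,\alpha$.
   Context: $\mathbb{Z}_N=\{0,\dots,N-1\}$ with addition mod $N$. For $f:\mathbb{Z}_N\to\mathbb{C}$, $\widehat f(\alpha)=\frac1N\sum_{x\in\mathbb{Z}_N}f(x)\exp(-2\pi i\alpha x/N)$. For $N\in\mathbb{N}$ and $x\in\mathbb{R}$, $|x|_N=\min\{|x-Nz|:z\in\mathbb{Z}\}$. *)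

theory Defs
  imports "HOL-Analysis.Analysis"
begin

definition fourier :: "nat \<Rightarrow> (nat \<Rightarrow> complex) \<Rightarrow> nat \<Rightarrow> complex" where
  "fourier N f \<alpha> = (1 / of_nat N) *
     (\<Sum>x<N. f x * exp (- 2 * of_real pi * \<i> * of_nat \<alpha> * of_nat x / of_nat N))"

definition absN :: "nat \<Rightarrow> real \<Rightarrow> real" where
  "absN N x = (INF z::int. \<bar>x - real N * real_of_int z\<bar>)"

definition bitfun :: "nat \<Rightarrow> nat \<Rightarrow> complex" where
  "bitfun i x = (-1) ^ (x div 2 ^ i mod 2)"

end

theory Submission
  imports Defs "HOL-Library.Real_Mod"
begin

text \<open>Write 2^k = 2LM with L = 2^i, M = 2^(k-i-1), and w = exp(-2\<pi>i\<alpha>/2^k). Since bit_i has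
  period 2L and equals 1 on [0,L) and -1 on [L,2L), the transform factors as
  2^-k (\<Sum>t<M. w^(2Lt)) (1 - w^L) (\<Sum>y<L. w^y).
  The first factor vanishes unless M divides \<alpha>, the second when \<alpha>/M is even. For \<alpha> = mM
  with m odd, w^L = -1 and the transform equals 2 / (L (1 - w)); the chord bound
  |1 - exp(it)| \<ge> |t|/3 for |t| \<le> \<pi> then gives the estimate with c = 1.\<close>

lemma sin_ge_third:
  fixes s :: real
  assumes "0 \<le> s" "s \<le> pi / 2"
  shows "s / 3 \<le> sin s"
proof -
  have "\<bar>sin s - (\<Sum>m<3. sin_coeff m * s ^ m)\<bar> \<le> inverse (fact 3) * \<bar>s\<bar> ^ 3"
    by (rule Maclaurin_sin_bound)
  moreover have "(\<Sum>m<3. sin_coeff m * s ^ m) = s"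
    by (simp add: numeral_3_eq_3 sin_coeff_def)
  moreover have "fact 3 = (6::real)"
    by (simp add: numeral_3_eq_3)
  ultimately have "s - s ^ 3 / 6 \<le> sin s"
    using assms by (simp add: abs_if split: if_splits)
  moreover have "s * s \<le> 2 * 2"
    using assms pi_less_4 by (intro mult_mono) auto
  then have "s ^ 3 \<le> 4 * s"
    using assms by (simp add: power3_eq_cube mult_right_mono)
  ultimately show ?thesis by linarith
qed

lemma norm_one_minus_cis_ge:
  fixes t :: real
  assumes "\<bar>t\<bar> \<le> pi"
  shows "\<bar>t\<bar> / 3 \<le> cmod (1 - cis t)"
proof -
  have "(cmod (1 - cis t))\<^sup>2 = (1 - cos t)\<^sup>2 + (sin t)\<^sup>2"
    by (simp add: cmod_def)
  also have "\<dots> = 2 - 2 * cos t"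
    by (simp add: power2_eq_square algebra_simps sin_squared_eq)
  also have "\<dots> = (2 * \<bar>sin (t / 2)\<bar>)\<^sup>2"
    using cos_double_sin[of "t / 2"] by (simp add: power2_eq_square)
  finally have chord: "cmod (1 - cis t) = 2 * \<bar>sin (t / 2)\<bar>"
    by (rule power2_eq_imp_eq) auto
  have "\<bar>sin (t / 2)\<bar> = sin (\<bar>t\<bar> / 2)"
    using sin_ge_zero[of "\<bar>t\<bar> / 2"] assms by (cases "t \<ge> 0") auto
  moreover have "\<bar>t\<bar> / 2 / 3 \<le> sin (\<bar>t\<bar> / 2)"
    by (rule sin_ge_third) (use assms in auto)
  ultimately show ?thesis
    unfolding chord by simp
qed

lemma norm_one_minus_cis_pi_ge:
  fixes x :: real
  assumes "0 \<le> x" "x \<le> 2"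
  shows "min x (2 - x) \<le> cmod (1 - cis (- pi * x))"
proof -
  have chord: "y \<le> cmod (1 - cis t)" if "\<bar>t\<bar> = pi * y" "0 \<le> y" "y \<le> 1" for t y
  proof -
    have "3 * y \<le> pi * y"
      using pi_gt3 \<open>0 \<le> y\<close> by (intro mult_right_mono) auto
    then have "y \<le> pi * y / 3" by simp
    also have "\<dots> \<le> cmod (1 - cis t)"
      using norm_one_minus_cis_ge[of t] that by (simp add: mult_left_le)
    finally show ?thesis .
  qed
  have "cis (pi * (2 - x)) = cis (2 * pi) * cis (- pi * x)"
    by (simp add: cis_mult algebra_simps)
  then have shift: "cis (- pi * x) = cis (pi * (2 - x))"
    by simp
  show ?thesis
  proof (cases "x \<le> 1")
    case True
    then show ?thesis
      using chord[of "- pi * x" x] assms by (simp add: abs_mult)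
  next
    case False
    then show ?thesis
      using chord[of "pi * (2 - x)" "2 - x"] assms unfolding shift by (simp add: abs_mult)
  qed
qed

lemma absN_of_nat:
  assumes "a \<le> N"
  shows "absN N (real a) = real (min a (N - a))"
proof -
  let ?d = "\<lambda>z::int. \<bar>real a - real N * real_of_int z\<bar>"
  have bdd: "bdd_below (range ?d)"
    by (intro bdd_belowI[of _ 0]) auto
  have "real (min a (N - a)) \<le> ?d z" for z
  proof (cases "z \<le> 0")
    case True
    then have "real N * real_of_int z \<le> 0"
      by (simp add: mult_nonneg_nonpos)
    then show ?thesis by simp
  next
    case False
    then have "real N * 1 \<le> real N * real_of_int z"
      by (intro mult_left_mono) auto
    then show ?thesis
      using assms by (simp add: of_nat_diff)
  qed
  then have "real (min a (N - a)) \<le> absN N (real a)"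
    unfolding absN_def by (intro cINF_greatest) auto
  moreover have "absN N (real a) \<le> ?d 0" and "absN N (real a) \<le> ?d 1"
    unfolding absN_def by (intro cINF_lower[OF bdd]; simp)+
  then have "absN N (real a) \<le> real (min a (N - a))"
    using assms by (auto simp: min_def of_nat_diff)
  ultimately show ?thesis by simp
qed

lemma fourier_eq_sum_cis_power:
  "fourier N f \<alpha> = (\<Sum>x<N. f x * cis (-2 * pi * real \<alpha> / real N) ^ x) / of_nat N"
proof -
  have exp_eq: "exp (- 2 * of_real pi * \<i> * of_nat \<alpha> * of_nat x / of_nat N)
      = cis (-2 * pi * real \<alpha> / real N) ^ x" for x
  proof -
    have "cis (-2 * pi * real \<alpha> / real N) ^ x
        = exp (\<i> * of_real (real x * (-2 * pi * real \<alpha> / real N)))"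
      by (subst Complex.DeMoivre) (rule cis_conv_exp)
    also have "\<i> * of_real (real x * (-2 * pi * real \<alpha> / real N))
        = - 2 * of_real pi * \<i> * of_nat \<alpha> * of_nat x / of_nat N"
      by (simp add: field_simps)
    finally show ?thesis by simp
  qed
  show ?thesis
    unfolding fourier_def exp_eq by (simp add: divide_inverse mult.commute sum_distrib_left)
qed

lemma cis_frac_power_eq_1_iff:
  assumes "0 < N"
  shows "cis (-2 * pi * real a / real N) ^ n = 1 \<longleftrightarrow> N dvd a * n"
proof -
  have "cis (-2 * pi * real a / real N) ^ n = cis ((- real (a * n) / real N) * (2 * pi))"
    by (simp add: Complex.DeMoivre field_simps)
  also have "\<dots> = 1 \<longleftrightarrow> (\<exists>z::int. - real (a * n) / real N = of_int z)"
    unfolding cis_eq_1_iff by (simp only: mult_cancel_right) simp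
  also have "\<dots> \<longleftrightarrow> N dvd a * n"
  proof
    assume "\<exists>z::int. - real (a * n) / real N = of_int z"
    then obtain z :: int where "- real (a * n) / real N = of_int z" ..
    then have "real (a * n) / real N = of_int (- z)" by simp
    then have "real (a * n) = of_int (- z) * real N"
      using assms by (simp add: divide_eq_eq)
    then have "int (a * n) = - z * int N"
      by (metis of_int_eq_iff of_int_mult of_int_of_nat_eq)
    then show "N dvd a * n"
      by (metis dvd_triv_right int_dvd_int_iff)
  next
    assume "N dvd a * n"
    then obtain q where "a * n = N * q" by blast
    then show "\<exists>z::int. - real (a * n) / real N = of_int z"
      using assms by (intro exI[of _ "- int q"]) simp
  qed
  finally show ?thesis .
qed

lemma sum_lessThan_mult_blocks:
  fixes g :: "nat \<Rightarrow> 'a::comm_monoid_add"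
  shows "(\<Sum>x<M * P. g x) = (\<Sum>t<M. \<Sum>y<P. g (t * P + y))"
  by (simp add: sum.nat_group[symmetric] sum.shift_bounds_nat_ivl[of _ 0 _ P, simplified]
      add.commute atLeast0LessThan)

lemma bitfun_add_period: "bitfun i (t * (2 * 2 ^ i) + y) = bitfun i y"
proof -
  have "(t * (2 * 2 ^ i) + y) div 2 ^ i = y div 2 ^ i + 2 * t"
    using div_mult_self1[of "2 ^ i" y "2 * t"] by (simp add: ac_simps)
  then show ?thesis
    unfolding bitfun_def by simp
qed

lemma bitfun_lower_half: "y < 2 ^ i \<Longrightarrow> bitfun i y = 1"
  unfolding bitfun_def by simp

lemma bitfun_upper_half: "y < 2 ^ i \<Longrightarrow> bitfun i (2 ^ i + y) = -1"
  unfolding bitfun_def by simp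

lemma sum_bitfun_times_power:
  fixes i M :: nat and w :: complex
  defines "L \<equiv> 2 ^ i"
  shows "(\<Sum>x<M * (2 * L). bitfun i x * w ^ x)
       = (\<Sum>t<M. (w ^ (2 * L)) ^ t) * (1 - w ^ L) * (\<Sum>y<L. w ^ y)"
proof -
  have "(\<Sum>y<2 * L. bitfun i y * w ^ y)
      = (\<Sum>y<L. bitfun i y * w ^ y) + (\<Sum>y<L. bitfun i (L + y) * w ^ (L + y))"
    using sum_lessThan_mult_blocks[of "\<lambda>y. bitfun i y * w ^ y" 2 L]
    by (simp add: numeral_2_eq_2)
  also have "\<dots> = (\<Sum>y<L. w ^ y) - w ^ L * (\<Sum>y<L. w ^ y)"
    unfolding sum_distrib_left diff_conv_add_uminus sum_negf[symmetric]
    by (intro arg_cong2[where f = "(+)"] sum.cong)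
      (simp_all add: L_def bitfun_lower_half bitfun_upper_half power_add)
  also have "\<dots> = (1 - w ^ L) * (\<Sum>y<L. w ^ y)"
    by (simp add: algebra_simps)
  finally have period: "(\<Sum>y<2 * L. bitfun i y * w ^ y) = (1 - w ^ L) * (\<Sum>y<L. w ^ y)" .
  have "(\<Sum>x<M * (2 * L). bitfun i x * w ^ x)
      = (\<Sum>t<M. \<Sum>y<2 * L. bitfun i (t * (2 * L) + y) * w ^ (t * (2 * L) + y))"
    by (rule sum_lessThan_mult_blocks)
  also have "\<dots> = (\<Sum>t<M. (w ^ (2 * L)) ^ t * (\<Sum>y<2 * L. bitfun i y * w ^ y))"
  proof (intro sum.cong refl)
    fix t
    have "bitfun i (t * (2 * L) + y) * w ^ (t * (2 * L) + y)
        = (w ^ (2 * L)) ^ t * (bitfun i y * w ^ y)" for y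
      using bitfun_add_period[of i t y] unfolding L_def power_add power_mult mult.commute[of t]
      by simp
    then show "(\<Sum>y<2 * L. bitfun i (t * (2 * L) + y) * w ^ (t * (2 * L) + y))
        = (w ^ (2 * L)) ^ t * (\<Sum>y<2 * L. bitfun i y * w ^ y)"
      by (simp add: sum_distrib_left)
  qed
  also have "\<dots> = (\<Sum>t<M. (w ^ (2 * L)) ^ t) * (\<Sum>y<2 * L. bitfun i y * w ^ y)"
    by (simp add: sum_distrib_right)
  finally show ?thesis
    by (simp only: period mult.assoc)
qed

lemma two_power_split:
  assumes "i < k"
  shows "(2::nat) ^ k = 2 ^ (k - i - 1) * (2 * 2 ^ i)"
proof -
  have "k = (k - i - 1) + Suc i"
    using assms by simp
  then show ?thesis
    by (metis power_add power_Suc)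
qed

lemma fourier_bitfun_factored:
  fixes i k \<alpha> :: nat
  assumes ik: "i < k"
  defines "L \<equiv> 2 ^ i" and "M \<equiv> 2 ^ (k - i - 1)"
    and "w \<equiv> cis (-2 * pi * real \<alpha> / real ((2::nat) ^ k))"
  shows "fourier (2 ^ k) (bitfun i) \<alpha>
       = (\<Sum>t<M. (w ^ (2 * L)) ^ t) * (1 - w ^ L) * (\<Sum>y<L. w ^ y) / 2 ^ k"
proof -
  have N: "(2::nat) ^ k = M * (2 * L)"
    unfolding L_def M_def by (rule two_power_split[OF ik])
  have "fourier (2 ^ k) (bitfun i) \<alpha> = (\<Sum>x<2 ^ k. bitfun i x * w ^ x) / of_nat (2 ^ k)"
    unfolding w_def by (rule fourier_eq_sum_cis_power)
  also have "(\<Sum>x<2 ^ k. bitfun i x * w ^ x)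
      = (\<Sum>t<M. (w ^ (2 * L)) ^ t) * (1 - w ^ L) * (\<Sum>y<L. w ^ y)"
    unfolding N L_def by (rule sum_bitfun_times_power)
  finally show ?thesis
    by simp
qed

lemma fourier_bitfun_eq_0:
  assumes "i < k" and not_odd_multiple: "\<nexists>m. odd m \<and> \<alpha> = m * 2 ^ (k - i - 1)"
  shows "fourier (2 ^ k) (bitfun i) \<alpha> = 0"
proof -
  define L M :: nat where "L = 2 ^ i" and "M = 2 ^ (k - i - 1)"
  define w where "w = cis (-2 * pi * real \<alpha> / real ((2::nat) ^ k))"
  have root: "w ^ n = 1 \<longleftrightarrow> M * (2 * L) dvd \<alpha> * n" for n
    unfolding w_def L_def M_def two_power_split[OF assms(1)]
    by (rule cis_frac_power_eq_1_iff) simp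
  have F: "fourier (2 ^ k) (bitfun i) \<alpha>
      = (\<Sum>t<M. (w ^ (2 * L)) ^ t) * (1 - w ^ L) * (\<Sum>y<L. w ^ y) / 2 ^ k"
    unfolding w_def L_def M_def by (rule fourier_bitfun_factored[OF assms(1)])
  show ?thesis
  proof (cases "M dvd \<alpha>")
    case True
    then obtain m where m: "\<alpha> = m * M"
      by (metis dvd_div_mult_self)
    with not_odd_multiple have "even m"
      by (auto simp: M_def)
    then have "w ^ L = 1"
      unfolding root m by auto
    then show ?thesis
      unfolding F by simp
  next
    case False
    have "0 < L" by (simp add: L_def)
    then have "w ^ (2 * L) \<noteq> 1"
      unfolding root using False by simp
    moreover have "(w ^ (2 * L)) ^ M = 1"
      unfolding power_mult[symmetric] root by simp
    ultimately have "(\<Sum>t<M. (w ^ (2 * L)) ^ t) = 0"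
      by (simp add: sum_gp_strict)
    then show ?thesis
      unfolding F by simp
  qed
qed

lemma norm_fourier_bitfun_odd_multiple:
  fixes i k m \<alpha> :: nat
  assumes "i < k" "odd m" "\<alpha> = m * 2 ^ (k - i - 1)"
  shows "norm (fourier (2 ^ k) (bitfun i) \<alpha>) = 2 / (2 ^ i * cmod (1 - cis (- pi * (m / 2 ^ i))))"
proof -
  define L M :: nat where "L = 2 ^ i" and "M = 2 ^ (k - i - 1)"
  define w where "w = cis (-2 * pi * real \<alpha> / real ((2::nat) ^ k))"
  have N: "(2::nat) ^ k = M * (2 * L)"
    unfolding L_def M_def by (rule two_power_split[OF assms(1)])
  have root: "w ^ n = 1 \<longleftrightarrow> M * (2 * L) dvd m * M * n" for n
    unfolding w_def N assms(3) M_def[symmetric]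
    by (rule cis_frac_power_eq_1_iff) (simp add: L_def M_def)
  have "M * (2 * L) dvd m * M * L \<longleftrightarrow> 2 dvd m"
    by (simp add: L_def M_def ac_simps)
  then have "w ^ L \<noteq> 1" and "(w ^ L)\<^sup>2 = 1"
    using \<open>odd m\<close> unfolding root power_mult[symmetric] by (auto simp: ac_simps)
  then have wL: "w ^ L = -1"
    by (simp add: power2_eq_1_iff)
  then have "w \<noteq> 1"
    by auto
  then have geom_L: "(\<Sum>y<L. w ^ y) = 2 / (1 - w)"
    using wL by (simp add: sum_gp_strict)
  have geom_M: "(\<Sum>t<M. (w ^ (2 * L)) ^ t) = of_nat M"
    using wL by (simp add: power_mult mult.commute[of 2])
  have two_k: "(2::complex) ^ k = of_nat M * 2 * of_nat L"
    using arg_cong[OF N, of "of_nat :: nat \<Rightarrow> complex"] by simp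
  have "fourier (2 ^ k) (bitfun i) \<alpha>
      = (\<Sum>t<M. (w ^ (2 * L)) ^ t) * (1 - w ^ L) * (\<Sum>y<L. w ^ y) / 2 ^ k"
    unfolding w_def L_def M_def by (rule fourier_bitfun_factored[OF assms(1)])
  also have "\<dots> = of_nat M * 2 * (2 / (1 - w)) / (of_nat M * 2 * of_nat L)"
    unfolding geom_L geom_M wL two_k by simp
  also have "\<dots> = 2 / (of_nat L * (1 - w))"
    by (simp add: M_def)
  finally have "fourier (2 ^ k) (bitfun i) \<alpha> = 2 / (of_nat L * (1 - w))" .
  moreover have "w = cis (- pi * (m / L))"
    unfolding w_def N assms(3) M_def[symmetric] by (simp add: M_def L_def field_simps)
  ultimately show ?thesis
    by (simp add: L_def norm_divide norm_mult norm_power)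
qed

lemma norm_fourier_bitfun_le:
  fixes i k m \<alpha> :: nat
  assumes "i < k" "\<alpha> < 2 ^ k" "odd m" "\<alpha> = m * 2 ^ (k - i - 1)"
  shows "norm (fourier (2 ^ k) (bitfun i) \<alpha>) \<le> 2 ^ (k - i) / absN (2 ^ k) (real \<alpha>)"
proof -
  define L M :: nat where "L = 2 ^ i" and "M = 2 ^ (k - i - 1)"
  define d where "d = min m (2 * L - m)"
  have N: "(2::nat) ^ k = M * (2 * L)"
    unfolding L_def M_def by (rule two_power_split[OF assms(1)])
  have "m < 2 * L"
    using assms(2,4) unfolding N M_def[symmetric] by simp
  with odd_pos[OF \<open>odd m\<close>] have "1 \<le> d"
    by (auto simp: d_def)
  have "absN (2 ^ k) (real \<alpha>) = real (min \<alpha> (2 ^ k - \<alpha>))"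
    using assms(2) by (intro absN_of_nat) simp
  also have "min \<alpha> (2 ^ k - \<alpha>) = min (m * M) ((2 * L - m) * M)"
    using diff_mult_distrib[of "2 * L" m M] unfolding N assms(4) M_def[symmetric]
    by (simp add: ac_simps)
  also have "\<dots> = real M * real d"
    by (auto simp: d_def min_def)
  finally have absN_eq: "absN (2 ^ k) (real \<alpha>) = real M * real d" .
  have "real d / real L = min (m / L) (2 - m / L)"
    using \<open>m < 2 * L\<close> by (auto simp: d_def L_def of_nat_diff field_simps min_def)
  also have "\<dots> \<le> cmod (1 - cis (- pi * (m / L)))"
    using of_nat_less_iff[of m "2 * L", where 'a = real] \<open>m < 2 * L\<close>
    by (intro norm_one_minus_cis_pi_ge) (simp_all add: L_def field_simps)
  finally have chord: "real d \<le> real L * cmod (1 - cis (- pi * (m / L)))"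
    by (simp add: L_def field_simps)
  have "norm (fourier (2 ^ k) (bitfun i) \<alpha>) = 2 / (real L * cmod (1 - cis (- pi * (m / L))))"
    using norm_fourier_bitfun_odd_multiple[OF assms(1,3,4)] by (simp add: L_def)
  also have "\<dots> \<le> 2 / real d"
    using chord \<open>1 \<le> d\<close> by (intro divide_left_mono) auto
  also have "\<dots> = 2 * real M / absN (2 ^ k) (real \<alpha>)"
    by (simp add: absN_eq M_def)
  also have "2 * real M = 2 ^ (k - i)"
    using assms(1) by (simp add: M_def flip: power_Suc)
  finally show ?thesis .
qed

theorem lemma6p3:
  shows "\<exists>c::real. \<forall>k i \<alpha>::nat. i < k \<longrightarrow> \<alpha> < 2 ^ k \<longrightarrow>
     ((\<not> (\<exists>m. odd m \<and> \<alpha> = m * 2 ^ (k - i - 1))) \<longrightarrow> fourier (2 ^ k) (bitfun i) \<alpha> = 0) \<and>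
     ((\<exists>m. odd m \<and> \<alpha> = m * 2 ^ (k - i - 1)) \<longrightarrow>
        norm (fourier (2 ^ k) (bitfun i) \<alpha>) \<le> c * 2 ^ (k - i) / absN (2 ^ k) (real \<alpha>))"
  using fourier_bitfun_eq_0 norm_fourier_bitfun_le by (intro exI[of _ 1]) auto

end
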